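(* Let $m\ge1$ be an integer and $\mathcal{U}=\{S_0,S_{2,1^0},\ldots,S_{2,1^{m-1}}\}$. Define vectors $(y_0,\ldots,y_m)\in\mathbb{R}^{m+1}$: $\mathbf{d}_{1,m}=(1,0,\ldots,0)$; $\mathbf{d}_{2,m}=(1,1,\ldots,1)$; $\mathbf{d}_{3,m}$ with $y_0=1,y_1=2$ and $y_k=k$ for $k\ge2$; $\mathbf{d}_{4,m}$ with $y_0=1$ and $y_k=k+2$ for $k\ge1$; $\mathbf{d}_{5,m}$ with $y_0=2,y_1=4$ and $y_k=2k+1$ for $k\ge2$. Then $\mathbf{d}_{j,m}\in\operatorname{trop}(\mathcal{N}_{\mathcal{U}})$ for each $1\le j\le5$.
   Context: All graphs are finite; $\hom(H;G)$ is the number of graph homomorphisms from $H$ to $G$. $S_0$ is a single vertex; for $k\ge0$, $S_{2,1^k}$ is the tree with vertex set $\{1,\ldots,k+3\}$ and edge set $\{\{1,j\}:2\le j\le k+2\}\cup\{\{k+2,k+3\}\}$. $\mathcal{N}_{\mathcal{U}}$ is the set of vectors $(\hom(S_0;G),\hom(S_{2,1^0};G),\ldots,\hom(S_{2,1^{m-1}};G))$ over all graphs $G$; $\operatorname{trop}(\mathcal{N}_{\mathcal{U}})=\lim_{\tau\to\infty}\log_\tau(\mathcal{N}_{\mathcal{U}}\cap\mathbb{R}^{m+1}_{>0})$ (coordinatewise logarithm), which equals the closure of the conical hull of the coordinatewise logarithms of the points of $\mathcal{N}_{\mathcal{U}}$ with all coordinates positive. *)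

theory Defs
  imports "HOL-Analysis.Analysis"
begin

text \<open>A finite simple graph with vertex set {0..<n} and symmetric irreflexive
adjacency relation E (every finite graph is isomorphic to one of this form).\<close>
definition simple_graph :: "nat \<Rightarrow> (nat \<Rightarrow> nat \<Rightarrow> bool) \<Rightarrow> bool" where
  "simple_graph n E \<longleftrightarrow> (\<forall>i j. E i j \<longrightarrow> E j i) \<and> (\<forall>i. \<not> E i i)
     \<and> (\<forall>i j. E i j \<longrightarrow> i < n \<and> j < n)"

definition hom_count :: "nat \<Rightarrow> (nat \<Rightarrow> nat \<Rightarrow> bool) \<Rightarrow> nat \<Rightarrow> (nat \<Rightarrow> nat \<Rightarrow> bool) \<Rightarrow> nat" where
  "hom_count nH EH n E =
     card {f \<in> {..<nH} \<rightarrow>\<^sub>E {..<n}. \<forall>i<nH. \<forall>j<nH. EH i j \<longrightarrow> E (f i) (f j)}"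

definition S0_edges :: "nat \<Rightarrow> nat \<Rightarrow> bool" where
  "S0_edges i j \<longleftrightarrow> False"

text \<open>S_{2,1^k}, with vertices relabelled 1..k+3 to 0..k+2: edges {0,j} for
1 \<le> j \<le> k+1 and the edge {k+1,k+2}.\<close>
definition S21_edges :: "nat \<Rightarrow> nat \<Rightarrow> nat \<Rightarrow> bool" where
  "S21_edges k i j \<longleftrightarrow>
     (i = 0 \<and> 1 \<le> j \<and> j \<le> k + 1) \<or> (j = 0 \<and> 1 \<le> i \<and> i \<le> k + 1) \<or>
     (i = k + 1 \<and> j = k + 2) \<or> (i = k + 2 \<and> j = k + 1)"

text \<open>The homomorphism-count vector (hom(S_0;G), hom(S_{2,1^0};G), ..., hom(S_{2,1^{m-1}};G)),
as a function on indices 0..m (0 outside).\<close>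
definition hom_vec :: "nat \<Rightarrow> nat \<Rightarrow> (nat \<Rightarrow> nat \<Rightarrow> bool) \<Rightarrow> nat \<Rightarrow> real" where
  "hom_vec m n E = (\<lambda>i. if i = 0 then real (hom_count 1 S0_edges n E)
                        else if i \<le> m then real (hom_count (i + 2) (S21_edges (i - 1)) n E)
                        else 0)"

text \<open>N_U (vectors in R^{m+1}, encoded as functions supported on {0..m}).\<close>
definition N_U :: "nat \<Rightarrow> (nat \<Rightarrow> real) set" where
  "N_U m = {hom_vec m n E | n E. simple_graph n E}"

definition conical_hull :: "(nat \<Rightarrow> real) set \<Rightarrow> (nat \<Rightarrow> real) set" where
  "conical_hull S = {x. \<exists>F c. finite F \<and> F \<subseteq> S \<and> (\<forall>v\<in>F. c v \<ge> 0) \<and>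
                        x = (\<lambda>i. \<Sum>v\<in>F. c v * v i)}"

definition trop_N_U :: "nat \<Rightarrow> (nat \<Rightarrow> real) set" where
  "trop_N_U m = closure (conical_hull
      ((\<lambda>v. \<lambda>i. if i \<le> m then ln (v i) else 0) ` {v \<in> N_U m. \<forall>i\<le>m. v i > 0}))"

definition dvec :: "nat \<Rightarrow> nat \<Rightarrow> nat \<Rightarrow> real" where
  "dvec j m = (\<lambda>k. if k > m then 0 else
     (if j = 1 then (if k = 0 then 1 else 0)
      else if j = 2 then 1
      else if j = 3 then (if k = 0 then 1 else if k = 1 then 2 else real k)
      else if j = 4 then (if k = 0 then 1 else real k + 2)
      else (if k = 0 then 2 else if k = 1 then 4 else 2 * real k + 1)))"

end

theory Submission
  imports Defs
begin

(* For each j we exhibit graphs G_t (t = 0, 1, ...) such that every coordinate of the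
   homomorphism vector of G_t grows like (t+1)^a_i with a_i the i-th entry of d_j. The
   scaled logarithm vectors log(hom vector of G_t) / log(t+1) lie in the cone generated by
   the log-points of N_U and converge to d_j, so d_j lies in its closure.
   The counts come from hom(S_{2,1^k}; G) = sum over edges (v,u) of deg(u) deg(v)^k:
   d_1 from an edge plus t isolated vertices, d_2 from t+1 disjoint edges, d_3 from the
   star K_{1,t+1}, d_4 from K_{t+2}, and d_5 from a cone over t+1 disjoint copies of K_{t+1}. *)

section \<open>Homomorphisms from S_{2,1^k}\<close>

definition neighbours :: "nat \<Rightarrow> (nat \<Rightarrow> nat \<Rightarrow> bool) \<Rightarrow> nat \<Rightarrow> nat set" where
  "neighbours n E v = {u. u < n \<and> E v u}"

definition deg :: "nat \<Rightarrow> (nat \<Rightarrow> nat \<Rightarrow> bool) \<Rightarrow> nat \<Rightarrow> nat" where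
  "deg n E v = card (neighbours n E v)"

lemma finite_neighbours [simp]: "finite (neighbours n E v)"
  by (simp add: neighbours_def)

lemma S21_edges_preserved_iff:
  assumes "\<And>i j. E i j \<Longrightarrow> E j i"
  shows "(\<forall>i<k+3. \<forall>j<k+3. S21_edges k i j \<longrightarrow> E (f i) (f j)) \<longleftrightarrow>
    (\<forall>j\<in>{1..k+1}. E (f 0) (f j)) \<and> E (f (k+1)) (f (k+2))"
proof
  assume edges: "\<forall>i<k+3. \<forall>j<k+3. S21_edges k i j \<longrightarrow> E (f i) (f j)"
  have "E (f 0) (f j)" if "j \<in> {1..k+1}" for j
    using edges[rule_format, of 0 j] that by (simp add: S21_edges_def)
  moreover have "E (f (k+1)) (f (k+2))"
    using edges[rule_format, of "k+1" "k+2"] by (simp add: S21_edges_def)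
  ultimately show "(\<forall>j\<in>{1..k+1}. E (f 0) (f j)) \<and> E (f (k+1)) (f (k+2))" by blast
qed (use assms in \<open>auto simp: S21_edges_def\<close>)

lemma S21_hom_set_eq:
  assumes "simple_graph n E"
  shows "{f \<in> {..<k+3} \<rightarrow>\<^sub>E {..<n}. \<forall>i<k+3. \<forall>j<k+3. S21_edges k i j \<longrightarrow> E (f i) (f j)} =
    {f \<in> extensional {..<k+3}. (\<forall>j\<in>{1..k+1}. E (f 0) (f j)) \<and> E (f (k+1)) (f (k+2))}"
proof -
  have sym: "\<And>i j. E i j \<Longrightarrow> E j i" and bounded: "\<And>i j. E i j \<Longrightarrow> i < n \<and> j < n"
    using assms by (auto simp: simple_graph_def)
  have "f \<in> {..<k+3} \<rightarrow> {..<n}"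
    if "\<forall>j\<in>{1..k+1}. E (f 0) (f j)" "E (f (k+1)) (f (k+2))" for f
  proof
    fix i assume "i \<in> {..<k+3}"
    then consider "i = 0" | "i \<in> {1..k+1}" | "i = k+2" by fastforce
    then show "f i \<in> {..<n}"
      by cases (use that bounded[of "f 0" "f 1"] bounded[of "f (k+1)"] bounded[of "f 0" "f i"] in auto)
  qed
  then show ?thesis
    using S21_edges_preserved_iff[where E = E, OF sym] by (auto simp: PiE_iff)
qed

lemma hom_count_S21:
  assumes "simple_graph n E"
  shows "hom_count (k+3) (S21_edges k) n E =
    (\<Sum>v<n. \<Sum>u\<in>neighbours n E v. deg n E u * deg n E v ^ k)"
proof -
  have bounded: "\<And>i j. E i j \<Longrightarrow> i < n \<and> j < n"
    using assms by (auto simp: simple_graph_def)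
  define H where
    "H = {f \<in> extensional {..<k+3}. (\<forall>j\<in>{1..k+1}. E (f 0) (f j)) \<and> E (f (k+1)) (f (k+2))}"
  define T where
    "T = (SIGMA v:{..<n}. SIGMA u:neighbours n E v. neighbours n E u \<times> ({1..k} \<rightarrow>\<^sub>E neighbours n E v))"
  \<comment> \<open>A homomorphism is determined by the images of the centre 0, of the leaf k+1 carrying the
    pendant edge, of the end k+2 of that edge, and of the leaves 1..k.\<close>
  define restr where "restr f = (f 0, f (k+1), f (k+2), restrict f {1..k})" for f :: "nat \<Rightarrow> nat"
  define glue where "glue = (\<lambda>(v, u, w, g) i :: nat.
    if i = 0 then v else if i = k+1 then u else if i = k+2 then w else g i :: nat)"
  have "bij_betw restr H T"
  proof (rule bij_betw_byWitness[where f' = glue])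
    show "\<forall>f\<in>H. glue (restr f) = f"
      by (auto simp: H_def restr_def glue_def extensional_def fun_eq_iff)
    show "\<forall>x\<in>T. restr (glue x) = x"
      by (auto simp: T_def restr_def glue_def PiE_def extensional_def fun_eq_iff)
    show "restr ` H \<subseteq> T"
    proof (rule image_subsetI)
      fix f assume "f \<in> H"
      then have "E (f 0) (f j)" if "j \<in> {1..k+1}" for j
        using that by (auto simp: H_def)
      moreover have "E (f (k+1)) (f (k+2))"
        using \<open>f \<in> H\<close> by (simp add: H_def)
      ultimately show "restr f \<in> T"
        using bounded[of "f 0" "f 1"] bounded[of "f (k+1)" "f (k+2)"] bounded[of "f 0" "f _"]
        by (auto simp: T_def restr_def neighbours_def)
    qed
    show "glue ` T \<subseteq> H"
      using bounded by (auto simp: H_def T_def glue_def neighbours_def PiE_def extensional_def)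
  qed
  then have "card H = card T"
    by (rule bij_betw_same_card)
  also have "card T = (\<Sum>v<n. \<Sum>u\<in>neighbours n E v. deg n E u * deg n E v ^ k)"
    by (simp add: T_def deg_def card_cartesian_product card_PiE finite_PiE)
  finally show ?thesis
    by (simp add: hom_count_def S21_hom_set_eq[OF assms] H_def)
qed

lemma hom_count_S21_regular:
  assumes "simple_graph n E" and "\<And>v. v < n \<Longrightarrow> deg n E v = r"
  shows "hom_count (k+3) (S21_edges k) n E = n * r ^ (k+2)"
proof -
  have "hom_count (k+3) (S21_edges k) n E = (\<Sum>v<n. \<Sum>u\<in>neighbours n E v. r * r ^ k)"
    using assms by (simp add: hom_count_S21 neighbours_def)
  also have "\<dots> = n * r ^ (k+2)"
    using assms(2) by (simp add: deg_def[symmetric])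
  finally show ?thesis .
qed

lemma simple_graph_add_isolated: "simple_graph n E \<Longrightarrow> n \<le> N \<Longrightarrow> simple_graph N E"
  unfolding simple_graph_def by (meson order_less_le_trans)

lemma hom_count_S21_add_isolated:
  assumes "simple_graph n E" and "n \<le> N"
  shows "hom_count (k+3) (S21_edges k) N E = hom_count (k+3) (S21_edges k) n E"
proof -
  have bounded: "\<And>i j. E i j \<Longrightarrow> i < n \<and> j < n"
    using assms(1) by (auto simp: simple_graph_def)
  then have "neighbours N E v = neighbours n E v" and "v \<ge> n \<Longrightarrow> neighbours n E v = {}" for v
    using assms(2) by (fastforce simp: neighbours_def)+
  then show ?thesis
    using assms simple_graph_add_isolated[OF assms]
    by (simp add: hom_count_S21 deg_def sum.mono_neutral_right)
qed

section \<open>Cones and disjoint unions of cliques\<close>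

definition cone_graph :: "nat \<Rightarrow> (nat \<Rightarrow> nat \<Rightarrow> bool) \<Rightarrow> nat \<Rightarrow> nat \<Rightarrow> bool" where
  "cone_graph n E i j \<longleftrightarrow> E i j \<or> (i = n \<and> j < n) \<or> (j = n \<and> i < n)"

lemma simple_graph_cone_graph: "simple_graph n E \<Longrightarrow> simple_graph (Suc n) (cone_graph n E)"
  unfolding simple_graph_def cone_graph_def by (auto simp: less_Suc_eq)

lemma neighbours_cone_graph_apex: "simple_graph n E \<Longrightarrow> neighbours (Suc n) (cone_graph n E) n = {..<n}"
  by (auto simp: simple_graph_def cone_graph_def neighbours_def)

lemma neighbours_cone_graph:
  "simple_graph n E \<Longrightarrow> v < n \<Longrightarrow> neighbours (Suc n) (cone_graph n E) v = insert n (neighbours n E v)"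
  by (auto simp: simple_graph_def cone_graph_def neighbours_def)

lemma hom_count_S21_cone_graph:
  assumes G: "simple_graph n E" and regular: "\<And>v. v < n \<Longrightarrow> deg n E v = r"
  shows "hom_count (k+3) (S21_edges k) (Suc n) (cone_graph n E) =
    (r+1) * n ^ (k+1) + n * (r * (r+1) + n) * (r+1) ^ k"
proof -
  let ?d = "deg (Suc n) (cone_graph n E)"
  have apex_not_nbr: "n \<notin> neighbours n E v" for v
    by (simp add: neighbours_def)
  have deg_apex: "?d n = n"
    using G by (simp add: deg_def neighbours_cone_graph_apex)
  have deg_base: "?d v = r + 1" if "v < n" for v
    using G that regular[OF that] apex_not_nbr by (simp add: deg_def neighbours_cone_graph)
  have apex_term: "(\<Sum>u\<in>neighbours (Suc n) (cone_graph n E) n. ?d u * ?d n ^ k) = (r+1) * n ^ (k+1)"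
    using G by (simp add: neighbours_cone_graph_apex deg_apex deg_base algebra_simps)
  have base_term: "(\<Sum>u\<in>neighbours (Suc n) (cone_graph n E) v. ?d u * ?d v ^ k) = (r * (r+1) + n) * (r+1) ^ k"
    if "v < n" for v
  proof -
    have "(\<Sum>u\<in>neighbours n E v. ?d u) = (\<Sum>u\<in>neighbours n E v. r + 1)"
      by (rule sum.cong) (auto simp: neighbours_def deg_base)
    also have "\<dots> = r * (r+1)"
      using regular[OF that] by (simp add: deg_def)
    finally have "(\<Sum>u\<in>neighbours n E v. ?d u) = r * (r+1)" .
    moreover have "(\<Sum>u\<in>neighbours (Suc n) (cone_graph n E) v. ?d u * ?d v ^ k) =
        (?d n + (\<Sum>u\<in>neighbours n E v. ?d u)) * (r+1) ^ k"
      using G that apex_not_nbr by (simp add: neighbours_cone_graph deg_base sum_distrib_right distrib_right)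
    ultimately show ?thesis
      by (simp add: deg_apex)
  qed
  show ?thesis
    using simple_graph_cone_graph[OF G]
    by (simp add: hom_count_S21 lessThan_Suc apex_term base_term mult.assoc)
qed

lemma div_eq_iff_mem_block:
  fixes u c p :: nat
  assumes "p > 0"
  shows "u div p = c \<longleftrightarrow> u \<in> {c * p..<c * p + p}"
proof -
  have "u div p = c \<longleftrightarrow> c \<le> u div p \<and> u div p < c + 1"
    by linarith
  also have "\<dots> \<longleftrightarrow> c * p \<le> u \<and> u < (c + 1) * p"
    using assms by (simp add: less_eq_div_iff_mult_less_eq div_less_iff_less_mult)
  finally show ?thesis
    by (simp add: add.commute)
qed

definition cliques :: "nat \<Rightarrow> nat \<Rightarrow> nat \<Rightarrow> nat \<Rightarrow> bool" where
  "cliques q p i j \<longleftrightarrow> i < q * p \<and> j < q * p \<and> i \<noteq> j \<and> i div p = j div p"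

lemma simple_graph_cliques: "simple_graph (q * p) (cliques q p)"
  by (auto simp: simple_graph_def cliques_def)

lemma deg_cliques:
  assumes "v < q * p"
  shows "deg (q * p) (cliques q p) v = p - 1"
proof -
  let ?c = "v div p"
  have "p > 0"
    using assms by (cases p) auto
  have "?c < q"
    using assms by (simp add: less_mult_imp_div_less)
  have "(?c + 1) * p \<le> q * p"
    using \<open>?c < q\<close> by (intro mult_le_mono1) simp
  moreover have "cliques q p v u \<longleftrightarrow> u < q * p \<and> u \<noteq> v \<and> u div p = ?c" for u
    using assms by (auto simp: cliques_def)
  ultimately have "neighbours (q * p) (cliques q p) v = {?c * p..<?c * p + p} - {v}"
    using div_eq_iff_mem_block[OF \<open>p > 0\<close>] by (auto simp: neighbours_def)
  moreover have "v \<in> {?c * p..<?c * p + p}"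
    using div_eq_iff_mem_block[OF \<open>p > 0\<close>] by blast
  ultimately show ?thesis
    by (simp add: deg_def)
qed
section \<open>Polynomial growth\<close>

definition grows_as_power :: "(nat \<Rightarrow> real) \<Rightarrow> nat \<Rightarrow> bool" where
  "grows_as_power f a \<longleftrightarrow>
    (\<exists>A B. 0 < A \<and> (\<forall>t. A * (real t + 1) ^ a \<le> f t \<and> f t \<le> B * (real t + 1) ^ a))"

lemma grows_as_power_power: "grows_as_power (\<lambda>t. (real t + 1) ^ a) a"
  unfolding grows_as_power_def by (rule exI[of _ 1], rule exI[of _ 1]) simp

lemma grows_as_power_const: "0 < c \<Longrightarrow> grows_as_power (\<lambda>t. c) 0"
  unfolding grows_as_power_def by (rule exI[of _ c], rule exI[of _ c]) simp

lemma grows_as_power_nonneg: "grows_as_power f a \<Longrightarrow> 0 \<le> f t"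
  unfolding grows_as_power_def by (meson order_trans zero_le_power mult_nonneg_nonneg less_imp_le
    of_nat_0_le_iff add_nonneg_nonneg zero_le_one)

lemma grows_as_power_mult:
  assumes f: "grows_as_power f a" and g: "grows_as_power g b"
  shows "grows_as_power (\<lambda>t. f t * g t) (a + b)"
proof -
  obtain A B where A: "0 < A" and fb: "\<And>t. A * (real t + 1) ^ a \<le> f t \<and> f t \<le> B * (real t + 1) ^ a"
    using f by (auto simp: grows_as_power_def)
  obtain A' B' where A': "0 < A'" and gb: "\<And>t. A' * (real t + 1) ^ b \<le> g t \<and> g t \<le> B' * (real t + 1) ^ b"
    using g by (auto simp: grows_as_power_def)
  have "A * A' * (real t + 1) ^ (a + b) \<le> f t * g t \<and> f t * g t \<le> B * B' * (real t + 1) ^ (a + b)" for t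
  proof -
    have "0 \<le> A * (real t + 1) ^ a" "0 \<le> A' * (real t + 1) ^ b"
      using A A' by simp_all
    then have "(A * (real t + 1) ^ a) * (A' * (real t + 1) ^ b) \<le> f t * g t"
      and "f t * g t \<le> (B * (real t + 1) ^ a) * (B' * (real t + 1) ^ b)"
      using fb[of t] gb[of t] by (auto intro: mult_mono order_trans)
    then show ?thesis
      by (simp add: power_add algebra_simps)
  qed
  then show ?thesis
    using A A' unfolding grows_as_power_def by (metis mult_pos_pos)
qed

lemma grows_as_power_add:
  assumes f: "grows_as_power f a" and g: "grows_as_power g b"
  shows "grows_as_power (\<lambda>t. f t + g t) (max a b)"
proof -
  obtain A B where A: "0 < A" and fb: "\<And>t. A * (real t + 1) ^ a \<le> f t \<and> f t \<le> B * (real t + 1) ^ a"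
    using f by (auto simp: grows_as_power_def)
  obtain A' B' where A': "0 < A'" and gb: "\<And>t. A' * (real t + 1) ^ b \<le> g t \<and> g t \<le> B' * (real t + 1) ^ b"
    using g by (auto simp: grows_as_power_def)
  have "min A A' * (real t + 1) ^ max a b \<le> f t + g t \<and>
      f t + g t \<le> (\<bar>B\<bar> + \<bar>B'\<bar>) * (real t + 1) ^ max a b" for t
  proof -
    have pa: "(real t + 1) ^ a \<le> (real t + 1) ^ max a b" and pb: "(real t + 1) ^ b \<le> (real t + 1) ^ max a b"
      by (simp_all add: power_increasing)
    have "0 \<le> f t" "0 \<le> g t"
      using grows_as_power_nonneg[OF f] grows_as_power_nonneg[OF g] by blast+
    moreover have "min A A' * (real t + 1) ^ max a b \<le> A * (real t + 1) ^ a \<or>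
        min A A' * (real t + 1) ^ max a b \<le> A' * (real t + 1) ^ b"
      using A A' by (cases "a \<le> b") (auto simp: max_def intro: mult_right_mono)
    moreover have "f t \<le> \<bar>B\<bar> * (real t + 1) ^ max a b" "g t \<le> \<bar>B'\<bar> * (real t + 1) ^ max a b"
      using fb[of t] gb[of t] pa pb
      by (meson abs_ge_self abs_ge_zero mult_mono order_trans zero_le_power of_nat_0_le_iff
          add_nonneg_nonneg zero_le_one)+
    ultimately show ?thesis
      using fb[of t] gb[of t] by (auto simp: distrib_right)
  qed
  then show ?thesis
    using A A' unfolding grows_as_power_def by (metis min_less_iff_conj)
qed

lemma ln_ratio_tendsto_of_grows_as_power:
  assumes "grows_as_power f a"
  shows "((\<lambda>t. ln (f t) / ln (real t + 1)) \<longlongrightarrow> real a) sequentially"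
proof -
  obtain A B where A: "0 < A" and fb: "\<And>t. A * (real t + 1) ^ a \<le> f t \<and> f t \<le> B * (real t + 1) ^ a"
    using assms by (auto simp: grows_as_power_def)
  have ln_scale: "filterlim (\<lambda>t. ln (real t + 1)) at_top sequentially"
    by real_asymp
  have bound_tendsto: "((\<lambda>t. real a + ln c / ln (real t + 1)) \<longlongrightarrow> real a) sequentially" for c
    using tendsto_add[OF tendsto_const tendsto_divide_0[OF tendsto_const
        filterlim_at_top_imp_at_infinity[OF ln_scale]]] by simp
  have bounds: "real a + ln A / ln (real t + 1) \<le> ln (f t) / ln (real t + 1) \<and>
      ln (f t) / ln (real t + 1) \<le> real a + ln B / ln (real t + 1)" if "t > 0" for t
  proof -
    have pos: "0 < A * (real t + 1) ^ a" "0 < ln (real t + 1)"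
      using A that by simp_all
    have "0 < B * (real t + 1) ^ a"
      using fb[of t] pos by linarith
    then have "0 < B"
      by (simp add: zero_less_mult_iff add_pos_nonneg)
    have "ln (A * (real t + 1) ^ a) \<le> ln (f t)" "ln (f t) \<le> ln (B * (real t + 1) ^ a)"
      using fb[of t] pos by (simp_all add: ln_le_cancel_iff)
    moreover have "ln (C * (real t + 1) ^ a) = ln C + real a * ln (real t + 1)" if "0 < C" for C
      using that by (simp add: ln_mult ln_realpow add_pos_nonneg)
    ultimately have "ln A + real a * ln (real t + 1) \<le> ln (f t)"
      "ln (f t) \<le> ln B + real a * ln (real t + 1)"
      using A \<open>0 < B\<close> by simp_all
    moreover have "real a + c / ln (real t + 1) = (c + real a * ln (real t + 1)) / ln (real t + 1)" for c
      using pos by (simp add: field_simps)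
    ultimately show ?thesis
      using pos by (simp add: divide_right_mono)
  qed
  show ?thesis
  proof (rule tendsto_sandwich[OF _ _ bound_tendsto[of A] bound_tendsto[of B]])
    show "\<forall>\<^sub>F t in sequentially. real a + ln A / ln (real t + 1) \<le> ln (f t) / ln (real t + 1)"
      by (rule eventually_mono[OF eventually_gt_at_top[of 0]]) (use bounds in blast)
    show "\<forall>\<^sub>F t in sequentially. ln (f t) / ln (real t + 1) \<le> real a + ln B / ln (real t + 1)"
      by (rule eventually_mono[OF eventually_gt_at_top[of 0]]) (use bounds in blast)
  qed
qed

section \<open>Points of the tropicalization\<close>

lemma tendsto_fun_componentwise:
  fixes f :: "'a \<Rightarrow> 'b \<Rightarrow> real"
  assumes "\<And>i. ((\<lambda>t. f t i) \<longlongrightarrow> l i) F"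
  shows "(f \<longlongrightarrow> l) F"
proof -
  have "limitin (product_topology (\<lambda>i. euclidean) UNIV) f l F"
    using assms by (simp add: limitin_componentwise)
  then show ?thesis
    by (simp add: euclidean_product_topology)
qed

lemma hom_vec_0: "hom_vec m n E 0 = real n"
  by (simp add: hom_vec_def hom_count_def S0_edges_def card_PiE)

lemma hom_vec_Suc: "Suc k \<le> m \<Longrightarrow> hom_vec m n E (Suc k) = real (hom_count (k+3) (S21_edges k) n E)"
  by (simp add: hom_vec_def numeral_3_eq_3)

lemma mem_trop_N_U_of_grows_as_power:
  fixes N :: "nat \<Rightarrow> nat" and E :: "nat \<Rightarrow> nat \<Rightarrow> nat \<Rightarrow> bool"
  assumes graphs: "\<And>t. simple_graph (N t) (E t)"
    and growth: "\<And>i. i \<le> m \<Longrightarrow> grows_as_power (\<lambda>t. hom_vec m (N t) (E t) i) (a i)"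
  shows "(\<lambda>i. if i \<le> m then real (a i) else 0) \<in> trop_N_U m"
proof -
  define L where "L v = (\<lambda>i. if i \<le> m then ln (v i) else 0)" for v :: "nat \<Rightarrow> real"
  define x where "x t = (\<lambda>i. (1 / ln (real t + 1)) * L (hom_vec m (N t) (E t)) i)" for t
  have "x t \<in> conical_hull (L ` {v \<in> N_U m. \<forall>i\<le>m. v i > 0})" for t
  proof -
    have "0 < hom_vec m (N t) (E t) i" if "i \<le> m" for i
      using growth[OF that] unfolding grows_as_power_def
      by (smt (verit) mult_pos_pos zero_less_power of_nat_0_le_iff)
    then have "hom_vec m (N t) (E t) \<in> {v \<in> N_U m. \<forall>i\<le>m. v i > 0}"
      using graphs by (auto simp: N_U_def)
    then show ?thesis
      unfolding conical_hull_def x_def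
      by (intro CollectI exI[of _ "{L (hom_vec m (N t) (E t))}"] exI[of _ "\<lambda>_. 1 / ln (real t + 1)"]) auto
  qed
  moreover have "(x \<longlongrightarrow> (\<lambda>i. if i \<le> m then real (a i) else 0)) sequentially"
    using ln_ratio_tendsto_of_grows_as_power[OF growth]
    by (intro tendsto_fun_componentwise) (simp add: x_def L_def)
  ultimately show ?thesis
    unfolding trop_N_U_def L_def[symmetric] closure_sequential by blast
qed

lemma grows_as_power_cong: "grows_as_power f a \<Longrightarrow> (\<And>t. f t = g t) \<Longrightarrow> grows_as_power g a"
  by (simp add: grows_as_power_def)

lemma dvec_1_mem_trop_N_U: "dvec 1 m \<in> trop_N_U m"
proof -
  have "simple_graph (t+2) (cliques 1 2)" for t
    using simple_graph_add_isolated[OF simple_graph_cliques[of 1 2]] by simp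
  moreover have "grows_as_power (\<lambda>t. hom_vec m (t+2) (cliques 1 2) i) (if i = 0 then 1 else 0)"
    if "i \<le> m" for i
  proof (cases i)
    case 0
    have "grows_as_power (\<lambda>t. (real t + 1) ^ 1 + 1) (max 1 0)"
      by (intro grows_as_power_add grows_as_power_power grows_as_power_const) simp
    then show ?thesis
      using 0 by (simp add: hom_vec_0)
  next
    case (Suc k)
    have "hom_count (k+3) (S21_edges k) (t+2) (cliques 1 2) = 2" for t
      using hom_count_S21_add_isolated[OF simple_graph_cliques, of 1 2 "t+2" k]
        hom_count_S21_regular[OF simple_graph_cliques deg_cliques, of 1 2 k]
      by simp
    then show ?thesis
      using Suc that grows_as_power_const[of 2] by (simp add: hom_vec_Suc)
  qed
  ultimately have "(\<lambda>i. if i \<le> m then real (if i = 0 then 1 else 0) else 0) \<in> trop_N_U m"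
    by (rule mem_trop_N_U_of_grows_as_power)
  moreover have "dvec 1 m = (\<lambda>i. if i \<le> m then real (if i = 0 then 1 else 0) else 0)"
    by (auto simp: dvec_def fun_eq_iff)
  ultimately show ?thesis
    by simp
qed

lemma dvec_2_mem_trop_N_U: "dvec 2 m \<in> trop_N_U m"
proof -
  have "grows_as_power (\<lambda>t. hom_vec m ((t+1) * 2) (cliques (t+1) 2) i) 1" if "i \<le> m" for i
  proof -
    have "grows_as_power (\<lambda>t. 2 * (real t + 1) ^ 1) (0 + 1)"
      by (intro grows_as_power_mult grows_as_power_power grows_as_power_const) simp
    moreover have "hom_vec m ((t+1) * 2) (cliques (t+1) 2) i = 2 * (real t + 1) ^ 1" for t
    proof (cases i)
      case (Suc k)
      then show ?thesis
        using that hom_count_S21_regular[OF simple_graph_cliques deg_cliques, of "t+1" 2 k]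
        by (simp add: hom_vec_Suc)
    qed (simp add: hom_vec_0)
    ultimately show ?thesis
      by (simp add: grows_as_power_cong)
  qed
  then have "(\<lambda>i. if i \<le> m then real 1 else 0) \<in> trop_N_U m"
    by (rule mem_trop_N_U_of_grows_as_power[OF simple_graph_cliques])
  moreover have "dvec 2 m = (\<lambda>i. if i \<le> m then real 1 else 0)"
    by (auto simp: dvec_def fun_eq_iff)
  ultimately show ?thesis
    by simp
qed

lemma dvec_3_mem_trop_N_U: "dvec 3 m \<in> trop_N_U m"
proof -
  have empty: "simple_graph n (\<lambda>_ _. False)" "deg n (\<lambda>_ _. False) v = 0" for n v
    by (simp_all add: simple_graph_def deg_def neighbours_def)
  have "grows_as_power (\<lambda>t. hom_vec m (Suc (t+1)) (cone_graph (t+1) (\<lambda>_ _. False)) i)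
      (if i = 0 then 1 else max i 2)" if "i \<le> m" for i
  proof (cases i)
    case 0
    have "grows_as_power (\<lambda>t. (real t + 1) ^ 1 + 1) (max 1 0)"
      by (intro grows_as_power_add grows_as_power_power grows_as_power_const) simp
    then show ?thesis
      using 0 by (simp add: hom_vec_0)
  next
    case (Suc k)
    have "grows_as_power (\<lambda>t. (real t + 1) ^ (k+1) + (real t + 1) ^ 2) (max (k+1) 2)"
      by (intro grows_as_power_add grows_as_power_power)
    moreover have "hom_count (k+3) (S21_edges k) (Suc (t+1)) (cone_graph (t+1) (\<lambda>_ _. False)) =
        (t+1) ^ (k+1) + (t+1) ^ 2" for t
      using hom_count_S21_cone_graph[where n = "t+1" and k = k, OF empty(1) empty(2)] by (simp add: power2_eq_square)
    then have "hom_vec m (Suc (t+1)) (cone_graph (t+1) (\<lambda>_ _. False)) i =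
        (real t + 1) ^ (k+1) + (real t + 1) ^ 2" for t
      using Suc that by (simp add: hom_vec_Suc algebra_simps)
    ultimately show ?thesis
      using Suc by (simp add: grows_as_power_cong)
  qed
  then have "(\<lambda>i. if i \<le> m then real (if i = 0 then 1 else max i 2) else 0) \<in> trop_N_U m"
    by (rule mem_trop_N_U_of_grows_as_power[OF simple_graph_cone_graph[OF empty(1)]])
  moreover have "dvec 3 m = (\<lambda>i. if i \<le> m then real (if i = 0 then 1 else max i 2) else 0)"
    by (auto simp: dvec_def fun_eq_iff max_def)
  ultimately show ?thesis
    by simp
qed

lemma dvec_4_mem_trop_N_U: "dvec 4 m \<in> trop_N_U m"
proof -
  have "grows_as_power (\<lambda>t. hom_vec m (1 * (t+2)) (cliques 1 (t+2)) i) (if i = 0 then 1 else i + 2)"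
    if "i \<le> m" for i
  proof (cases i)
    case 0
    have "grows_as_power (\<lambda>t. (real t + 1) ^ 1 + 1) (max 1 0)"
      by (intro grows_as_power_add grows_as_power_power grows_as_power_const) simp
    then show ?thesis
      using 0 by (simp add: hom_vec_0)
  next
    case (Suc k)
    have "grows_as_power (\<lambda>t. ((real t + 1) ^ 1 + 1) * (real t + 1) ^ (k+2)) (max 1 0 + (k+2))"
      by (intro grows_as_power_mult grows_as_power_add grows_as_power_power grows_as_power_const) simp
    moreover have "hom_count (k+3) (S21_edges k) (1 * (t+2)) (cliques 1 (t+2)) = (t+2) * (t+1) ^ (k+2)" for t
      using hom_count_S21_regular[OF simple_graph_cliques deg_cliques, of 1 "t+2" k] by simp
    then have "hom_vec m (1 * (t+2)) (cliques 1 (t+2)) i = ((real t + 1) ^ 1 + 1) * (real t + 1) ^ (k+2)" for t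
      using Suc that by (simp add: hom_vec_Suc algebra_simps)
    ultimately show ?thesis
      using Suc by (simp add: grows_as_power_cong)
  qed
  then have "(\<lambda>i. if i \<le> m then real (if i = 0 then 1 else i + 2) else 0) \<in> trop_N_U m"
    by (rule mem_trop_N_U_of_grows_as_power[OF simple_graph_cliques])
  moreover have "dvec 4 m = (\<lambda>i. if i \<le> m then real (if i = 0 then 1 else i + 2) else 0)"
    by (auto simp: dvec_def fun_eq_iff)
  ultimately show ?thesis
    by simp
qed

lemma dvec_5_mem_trop_N_U: "dvec 5 m \<in> trop_N_U m"
proof -
  let ?n = "\<lambda>t::nat. (t+1) * (t+1)"
  have regular: "deg (?n t) (cliques (t+1) (t+1)) v = t" if "v < ?n t" for t v
    using deg_cliques[OF that] by simp
  have "grows_as_power (\<lambda>t. hom_vec m (Suc (?n t)) (cone_graph (?n t) (cliques (t+1) (t+1))) i)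
      (if i = 0 then 2 else max (2 * i + 1) (i + 3))" if "i \<le> m" for i
  proof (cases i)
    case 0
    have "grows_as_power (\<lambda>t. (real t + 1) ^ 2 + 1) (max 2 0)"
      by (intro grows_as_power_add grows_as_power_power grows_as_power_const) simp
    then show ?thesis
      using 0 by (simp add: hom_vec_0 power2_eq_square algebra_simps)
  next
    case (Suc k)
    have "0 \<le> real t * (real t + 1) \<and> real t * (real t + 1) \<le> (real t + 1) ^ 2" for t
      by (simp add: power2_eq_square mult_right_mono)
    then have "grows_as_power (\<lambda>t. real t * (real t + 1) + (real t + 1) ^ 2) 2"
      unfolding grows_as_power_def by (intro exI[of _ 1] exI[of _ 2]) auto
    then have "grows_as_power (\<lambda>t. (real t + 1) ^ (2*i+1) +
        (real t + 1) ^ 2 * (real t * (real t + 1) + (real t + 1) ^ 2) * (real t + 1) ^ k)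
        (max (2*i+1) (2 + 2 + k))"
      by (intro grows_as_power_add grows_as_power_mult grows_as_power_power)
    moreover have "hom_vec m (Suc (?n t)) (cone_graph (?n t) (cliques (t+1) (t+1))) i =
        (real t + 1) ^ (2*i+1) + (real t + 1) ^ 2 * (real t * (real t + 1) + (real t + 1) ^ 2) * (real t + 1) ^ k"
      for t
    proof -
      define x where "x = real t + 1"
      have "Suc k \<le> m"
        using Suc that by simp
      then have "hom_vec m (Suc (?n t)) (cone_graph (?n t) (cliques (t+1) (t+1))) i =
          real ((t+1) * (?n t) ^ (k+1) + ?n t * (t * (t+1) + ?n t) * (t+1) ^ k)"
        using hom_count_S21_cone_graph[where k = k, OF simple_graph_cliques regular[where t = t]] Suc
        by (simp only: hom_vec_Suc)
      also have "\<dots> = x * (x * x) ^ (k+1) + x * x * (real t * x + x * x) * x ^ k"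
        unfolding x_def by (simp only: of_nat_add of_nat_mult of_nat_power of_nat_1)
      also have "\<dots> = x ^ (2*i+1) + x ^ 2 * (real t * x + x ^ 2) * x ^ k"
        using Suc by (simp add: power_mult_distrib power_add power_mult[symmetric] mult_2 power2_eq_square)
      finally show ?thesis
        unfolding x_def .
    qed
    ultimately show ?thesis
      using Suc by (simp add: grows_as_power_cong)
  qed
  then have "(\<lambda>i. if i \<le> m then real (if i = 0 then 2 else max (2 * i + 1) (i + 3)) else 0) \<in> trop_N_U m"
    by (rule mem_trop_N_U_of_grows_as_power[OF simple_graph_cone_graph[OF simple_graph_cliques]])
  moreover have "dvec 5 m = (\<lambda>i. if i \<le> m then real (if i = 0 then 2 else max (2 * i + 1) (i + 3)) else 0)"
    by (auto simp: dvec_def fun_eq_iff max_def)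
  ultimately show ?thesis
    by simp
qed

theorem lemma4p2:
  fixes m j :: nat
  assumes "m \<ge> 1" and "1 \<le> j" and "j \<le> 5"
  shows "dvec j m \<in> trop_N_U m"
proof -
  have "j = 1 \<or> j = 2 \<or> j = 3 \<or> j = 4 \<or> j = 5"
    using assms(2,3) by linarith
  then show ?thesis
    using dvec_1_mem_trop_N_U dvec_2_mem_trop_N_U dvec_3_mem_trop_N_U dvec_4_mem_trop_N_U
      dvec_5_mem_trop_N_U
    by blast
qed

end
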